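(* Let $K=h^{-1/3}$ and $L=h^{-4/3}$. Let $x$ be a reference grid point in $\Omega=(-1,1)$ and $\phi$ a smooth function defined in a neighborhood of the grid. Then the scheme $F^{1D,e,\delta}$ is consistent with $F^{1D}$ and has accuracy \[ F^{1D,e,\delta}[\phi](x)-F^{1D}[\phi](x)=\mathcal O(h^{2/3}). \] Moreover, $F^{1D,e,\delta}$ is Lipschitz continuous with constant $C^h=h^{-4/3}+2h^{-10/3}$.
   Context: $F^{1D}[u]=(u_x^2u_{xx})^{1/3}$ (real cube root). With $A(p,q)=(p^2q)^{1/3}$, $A^\delta(p,q)=\operatorname{sgn}(q)\min(\lvert A(p,q)\rvert,K\lvert p\rvert,L\lvert q\rvert)$ ($\operatorname{sgn}(0)=0$), $A^{\delta,\pm}(p,q)=A^\delta(p^\pm,q^\pm)$ where $x^+=\max(x,0)$, $x^-=\min(x,0)$, the scheme on the uniform grid of spacing $h$ is $-F^{1D,e,\delta}[u]=A^{\delta,+}(\lvert u_x^h\rvert^+,-u_{xx}^h)+A^{\delta,-}(-\lvert u_x^h\rvert^-,-u_{xx}^h)$, where $\lvert u_x^h\rvert^+=\max\{\frac{u(x)-u(x+h)}h,\frac{u(x)-u(x-h)}h,0\}$, $-\lvert u_x^h\rvert^-=\min\{\frac{u(x)-u(x+h)}h,\frac{u(x)-u(x-h)}h,0\}$, $u_{xx}^h=\frac{u(x+h)-2u(x)+u(x-h)}{h^2}$. Writing a finite difference operator as $F^h[u](x)=F^h(x,u(x),u(x)-u(\cdot))$, it is Lipschitz continuous with constant $C$ if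 $\lvert F^h(x,r,v(\cdot))-F^h(x,s,w(\cdot))\rvert\le C\max(\lvert r-s\rvert,\lVert v-w\rVert_\infty)$ for all grid points $x$. Consistency with $F$ means $\lim_{h\to0,\,y\to x}F^h[\phi](y)=F[\phi](x)$ for smooth $\phi$. *)

theory Defs
  imports "HOL-Analysis.Analysis"
begin

definition smooth_on :: "real set \<Rightarrow> (real \<Rightarrow> real) \<Rightarrow> bool" where
  "smooth_on U f \<longleftrightarrow> (\<forall>n. ((deriv ^^ n) f) differentiable_on U)"

definition F1D :: "(real \<Rightarrow> real) \<Rightarrow> real \<Rightarrow> real" where
  "F1D u x = root 3 ((deriv u x)^2 * deriv (deriv u) x)"

definition Acube :: "real \<Rightarrow> real \<Rightarrow> real" where
  "Acube p q = root 3 (p^2 * q)"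

definition Adelta :: "real \<Rightarrow> real \<Rightarrow> real \<Rightarrow> real \<Rightarrow> real" where
  "Adelta K L p q = sgn q * min \<bar>Acube p q\<bar> (min (K * \<bar>p\<bar>) (L * \<bar>q\<bar>))"

definition pospart :: "real \<Rightarrow> real" where "pospart x = max x 0"
definition negpart :: "real \<Rightarrow> real" where "negpart x = min x 0"

definition Adelta_plus :: "real \<Rightarrow> real \<Rightarrow> real \<Rightarrow> real \<Rightarrow> real" where
  "Adelta_plus K L p q = Adelta K L (pospart p) (pospart q)"

definition Adelta_minus :: "real \<Rightarrow> real \<Rightarrow> real \<Rightarrow> real \<Rightarrow> real" where
  "Adelta_minus K L p q = Adelta K L (negpart p) (negpart q)"

definition uxh_plus :: "real \<Rightarrow> (real \<Rightarrow> real) \<Rightarrow> real \<Rightarrow> real" where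
  "uxh_plus h u x = max (max ((u x - u (x + h)) / h) ((u x - u (x - h)) / h)) 0"

definition neg_uxh_minus :: "real \<Rightarrow> (real \<Rightarrow> real) \<Rightarrow> real \<Rightarrow> real" where
  "neg_uxh_minus h u x = min (min ((u x - u (x + h)) / h) ((u x - u (x - h)) / h)) 0"

definition uxxh :: "real \<Rightarrow> (real \<Rightarrow> real) \<Rightarrow> real \<Rightarrow> real" where
  "uxxh h u x = (u (x + h) - 2 * u x + u (x - h)) / h^2"

definition F1D_scheme :: "real \<Rightarrow> real \<Rightarrow> real \<Rightarrow> (real \<Rightarrow> real) \<Rightarrow> real \<Rightarrow> real" where
  "F1D_scheme K L h u x =
     - (Adelta_plus K L (uxh_plus h u x) (- uxxh h u x)
        + Adelta_minus K L (neg_uxh_minus h u x) (- uxxh h u x))"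

definition F1De :: "real \<Rightarrow> (real \<Rightarrow> real) \<Rightarrow> real \<Rightarrow> real" where
  "F1De h u x = F1D_scheme (h powr (-1/3)) (h powr (-4/3)) h u x"

text \<open>Representation F^h(x, r, v(.)) with r = u(x), v(y) = u(x) - u(y).\<close>
definition scheme_rep :: "((real \<Rightarrow> real) \<Rightarrow> real \<Rightarrow> real) \<Rightarrow> real \<Rightarrow> real \<Rightarrow> (real \<Rightarrow> real) \<Rightarrow> real" where
  "scheme_rep G x r v = G (\<lambda>y. if y = x then r else r - v y) x"

text \<open>Lipschitz continuity with constant C on the uniform grid of spacing h through x,
  with the sup norm expressed via bounds M (so infinite sup norms are harmless).\<close>
definition scheme_lipschitz :: "real \<Rightarrow> ((real \<Rightarrow> real) \<Rightarrow> real \<Rightarrow> real) \<Rightarrow> real \<Rightarrow> bool" where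
  "scheme_lipschitz h G C \<longleftrightarrow>
     (\<forall>x r s v w M. \<bar>r - s\<bar> \<le> M \<and> (\<forall>k::int. \<bar>v (x + of_int k * h) - w (x + of_int k * h)\<bar> \<le> M)
        \<longrightarrow> \<bar>scheme_rep G x r v - scheme_rep G x s w\<bar> \<le> C * M)"

end

theory Submission
  imports Defs "HOL-Real_Asymp.Real_Asymp"
begin

text \<open>On arguments of matching sign the limiter \<open>A\<^sup>\<delta>\<close> is the truncated cube root
  \<open>G(a, b) = min ((a\<^sup>2 b)\<^bsup>1/3\<^esup>, K a, L b)\<close> of \<open>a, b \<ge> 0\<close>, which is \<open>K\<close>-Lipschitz in \<open>a\<close> and
  \<open>L\<close>-Lipschitz in \<open>b\<close>. The scheme is \<open>G\<close> applied to the one-sided slopes and the positive part of the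
  second difference, minus the same with the negative part; as only one of the two terms is
  active, perturbing the grid values by \<open>M\<close> changes the scheme by at most \<open>(K/h + 2L/h\<^sup>2) M\<close>.
  By Taylor's theorem the slopes are \<open>O(h)\<close>- and the second difference \<open>O(h\<^sup>2)\<close>-close to \<open>\<bar>\<phi>'\<bar>\<close>
  and \<open>\<phi>''\<close>, uniformly near \<open>x\<close>. Since \<open>K, L \<rightarrow> \<infinity>\<close>, the truncation is eventually inactive at the
  exact values, so the error is \<open>K O(h) + L O(h\<^sup>2) = O(h\<^bsup>2/3\<^esup>)\<close>; consistency is the same
  argument without rates, as \<open>G(A, B) \<rightarrow> (\<alpha>\<^sup>2 \<beta>)\<^bsup>1/3\<^esup>\<close> whenever \<open>K, L \<rightarrow> \<infinity>\<close>, \<open>A \<rightarrow> \<alpha>\<close>, \<open>B \<rightarrow> \<beta>\<close>.\<close>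

definition trunc_cbrt :: "real \<Rightarrow> real \<Rightarrow> real \<Rightarrow> real \<Rightarrow> real" where
  "trunc_cbrt K L a b = min (root 3 (a\<^sup>2 * b)) (min (K * a) (L * b))"

lemma trunc_cbrt_nonneg: "0 \<le> K \<Longrightarrow> 0 \<le> L \<Longrightarrow> 0 \<le> a \<Longrightarrow> 0 \<le> b \<Longrightarrow> 0 \<le> trunc_cbrt K L a b"
  unfolding trunc_cbrt_def by simp

lemma trunc_cbrt_le_right: "trunc_cbrt K L a b \<le> L * b"
  unfolding trunc_cbrt_def by simp

lemma trunc_cbrt_zero_right [simp]: "0 \<le> K \<Longrightarrow> 0 \<le> a \<Longrightarrow> trunc_cbrt K L a 0 = 0"
  unfolding trunc_cbrt_def by (simp add: min_def)

lemma trunc_cbrt_mono_left: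
  assumes "0 \<le> K" "a1 \<le> a2" "0 \<le> a1" "0 \<le> b"
  shows "trunc_cbrt K L a1 b \<le> trunc_cbrt K L a2 b"
proof -
  have "a1\<^sup>2 * b \<le> a2\<^sup>2 * b" using assms by (intro mult_right_mono power_mono) auto
  moreover have "K * a1 \<le> K * a2" using assms by (simp add: mult_left_mono)
  ultimately show ?thesis unfolding trunc_cbrt_def by (smt (verit) real_root_le_iff zero_less_numeral)
qed

lemma trunc_cbrt_mono_right:
  assumes "0 \<le> L" "b1 \<le> b2"
  shows "trunc_cbrt K L a b1 \<le> trunc_cbrt K L a b2"
proof -
  have "a\<^sup>2 * b1 \<le> a\<^sup>2 * b2" using assms by (intro mult_left_mono) auto
  moreover have "L * b1 \<le> L * b2" using assms by (simp add: mult_left_mono)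
  ultimately show ?thesis unfolding trunc_cbrt_def by (smt (verit) real_root_le_iff zero_less_numeral)
qed

text \<open>In the cube-root variables \<open>s = a\<^bsup>1/3\<^esup>\<close>, \<open>t = b\<^bsup>1/3\<^esup>\<close> the three
  candidates of the minimum are \<open>s\<^sup>2 t\<close>, \<open>K s\<^sup>3\<close> and \<open>L t\<^sup>3\<close>; where \<open>s\<^sup>2 t\<close> is the smallest,
  it grows at most as fast as the other two.\<close>

lemma cube_increment_left:
  fixes s1 s2 t K :: real
  assumes "0 < s1" "s1 \<le> s2" "0 \<le> t" "t \<le> K * s1"
  shows "s2\<^sup>2 * t - s1\<^sup>2 * t \<le> K * (s2 ^ 3 - s1 ^ 3)"
proof -
  have "0 \<le> K" using assms zero_le_mult_iff [of K s1] by linarith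
  have "s2\<^sup>2 * t - s1\<^sup>2 * t = (s2\<^sup>2 - s1\<^sup>2) * t" by (simp add: algebra_simps)
  also have "\<dots> \<le> (s2\<^sup>2 - s1\<^sup>2) * (K * s1)"
    using assms by (intro mult_left_mono) (auto intro: power_mono)
  also have "\<dots> = K * ((s2 - s1) * ((s2 + s1) * s1))" by (simp add: algebra_simps power2_eq_square)
  also have "\<dots> \<le> K * ((s2 - s1) * (s2\<^sup>2 + s2 * s1 + s1\<^sup>2))"
    using assms \<open>0 \<le> K\<close> by (intro mult_left_mono) (auto simp: algebra_simps power2_eq_square)
  also have "\<dots> = K * (s2 ^ 3 - s1 ^ 3)" by (simp add: algebra_simps power2_eq_square power3_eq_cube)
  finally show ?thesis .
qed

lemma cube_increment_right:
  fixes s t1 t2 L :: real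
  assumes "0 < t1" "t1 \<le> t2" "s\<^sup>2 \<le> L * t1\<^sup>2"
  shows "s\<^sup>2 * t2 - s\<^sup>2 * t1 \<le> L * (t2 ^ 3 - t1 ^ 3)"
proof -
  have "0 \<le> L" using assms order_trans [OF zero_le_power2 assms(3)] zero_le_mult_iff [of L "t1\<^sup>2"]
    by auto
  have "s\<^sup>2 * t2 - s\<^sup>2 * t1 = (t2 - t1) * s\<^sup>2" by (simp add: algebra_simps)
  also have "\<dots> \<le> (t2 - t1) * (L * t1\<^sup>2)" using assms by (intro mult_left_mono) auto
  also have "\<dots> \<le> (t2 - t1) * (L * (t2\<^sup>2 + t2 * t1 + t1\<^sup>2))"
    using assms \<open>0 \<le> L\<close> by (intro mult_left_mono) auto
  also have "\<dots> = L * (t2 ^ 3 - t1 ^ 3)" by (simp add: algebra_simps power2_eq_square power3_eq_cube)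
  finally show ?thesis .
qed

lemma root3_sq_mult: "root 3 (a\<^sup>2 * b) = (root 3 a)\<^sup>2 * root 3 b"
  by (simp add: real_root_mult real_root_power)

lemma cbrt_increment_left:
  assumes "0 < a1" "a1 \<le> a2" "0 \<le> b" "root 3 (a1\<^sup>2 * b) \<le> K * a1"
  shows "root 3 (a2\<^sup>2 * b) - root 3 (a1\<^sup>2 * b) \<le> K * (a2 - a1)"
proof -
  define s1 s2 t where "s1 = root 3 a1" and "s2 = root 3 a2" and "t = root 3 b"
  have a: "a1 = s1 ^ 3" "a2 = s2 ^ 3" using assms unfolding s1_def s2_def by auto
  have r: "root 3 (a1\<^sup>2 * b) = s1\<^sup>2 * t" "root 3 (a2\<^sup>2 * b) = s2\<^sup>2 * t"
    unfolding root3_sq_mult s1_def s2_def t_def by simp_all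
  have "0 < s1" "s1 \<le> s2" "0 \<le> t" using assms unfolding s1_def s2_def t_def by auto
  moreover have "s1\<^sup>2 * t \<le> (K * s1) * s1\<^sup>2"
    using assms(4) unfolding r by (simp add: a power2_eq_square power3_eq_cube algebra_simps)
  then have "t \<le> K * s1" using \<open>0 < s1\<close> by (simp add: mult.commute)
  ultimately show ?thesis unfolding r unfolding a by (rule cube_increment_left)
qed

lemma cbrt_increment_right:
  assumes "0 < b1" "b1 \<le> b2" "root 3 (a\<^sup>2 * b1) \<le> L * b1"
  shows "root 3 (a\<^sup>2 * b2) - root 3 (a\<^sup>2 * b1) \<le> L * (b2 - b1)"
proof -
  define s t1 t2 where "s = root 3 a" and "t1 = root 3 b1" and "t2 = root 3 b2"
  have b: "b1 = t1 ^ 3" "b2 = t2 ^ 3" using assms unfolding t1_def t2_def by auto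
  have r: "root 3 (a\<^sup>2 * b1) = s\<^sup>2 * t1" "root 3 (a\<^sup>2 * b2) = s\<^sup>2 * t2"
    unfolding root3_sq_mult s_def t1_def t2_def by simp_all
  have "0 < t1" "t1 \<le> t2" using assms unfolding t1_def t2_def by auto
  moreover have "s\<^sup>2 * t1 \<le> (L * t1\<^sup>2) * t1"
    using assms(3) unfolding r by (simp add: b power2_eq_square power3_eq_cube algebra_simps)
  then have "s\<^sup>2 \<le> L * t1\<^sup>2" using \<open>0 < t1\<close> by simp
  ultimately show ?thesis unfolding r unfolding b by (rule cube_increment_right)
qed

lemma trunc_cbrt_increment_left:
  assumes "0 \<le> K" "0 \<le> a1" "a1 \<le> a2" "0 \<le> b"
  shows "trunc_cbrt K L a2 b - trunc_cbrt K L a1 b \<le> K * (a2 - a1)"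
proof -
  have upper: "trunc_cbrt K L a2 b \<le> root 3 (a2\<^sup>2 * b)" "trunc_cbrt K L a2 b \<le> K * a2"
    "trunc_cbrt K L a2 b \<le> L * b"
    unfolding trunc_cbrt_def by auto
  consider "trunc_cbrt K L a1 b = K * a1" | "trunc_cbrt K L a1 b = L * b"
    | "trunc_cbrt K L a1 b = root 3 (a1\<^sup>2 * b)" "root 3 (a1\<^sup>2 * b) < K * a1"
    unfolding trunc_cbrt_def min_def by (smt (verit))
  then show ?thesis
  proof cases
    case 3
    have "0 \<le> root 3 (a1\<^sup>2 * b)" using assms by simp
    with 3 assms have "0 < a1" by (metis mult_zero_right order.strict_iff_order order_le_less_trans)
    with 3 assms upper show ?thesis using cbrt_increment_left [of a1 a2 b K] by linarith
  qed (use upper assms mult_left_mono [of a1 a2 K] in \<open>auto simp: right_diff_distrib\<close>)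
qed

lemma trunc_cbrt_increment_right:
  assumes "0 \<le> L" "0 \<le> a" "0 \<le> b1" "b1 \<le> b2"
  shows "trunc_cbrt K L a b2 - trunc_cbrt K L a b1 \<le> L * (b2 - b1)"
proof -
  have upper: "trunc_cbrt K L a b2 \<le> root 3 (a\<^sup>2 * b2)" "trunc_cbrt K L a b2 \<le> K * a"
    "trunc_cbrt K L a b2 \<le> L * b2"
    unfolding trunc_cbrt_def by auto
  consider "trunc_cbrt K L a b1 = K * a" | "trunc_cbrt K L a b1 = L * b1"
    | "trunc_cbrt K L a b1 = root 3 (a\<^sup>2 * b1)" "root 3 (a\<^sup>2 * b1) < L * b1"
    unfolding trunc_cbrt_def min_def by (smt (verit))
  then show ?thesis
  proof cases
    case 3
    have "0 \<le> root 3 (a\<^sup>2 * b1)" using assms by simp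
    with 3 assms have "0 < b1" by (metis mult_zero_right order.strict_iff_order order_le_less_trans)
    with 3 assms upper show ?thesis using cbrt_increment_right [of b1 b2 a L] by linarith
  qed (use upper assms mult_left_mono [of b1 b2 L] in \<open>auto simp: right_diff_distrib\<close>)
qed

lemma trunc_cbrt_lipschitz:
  assumes "0 \<le> K" "0 \<le> L" "0 \<le> a1" "0 \<le> a2" "0 \<le> b1" "0 \<le> b2"
  shows "\<bar>trunc_cbrt K L a1 b1 - trunc_cbrt K L a2 b2\<bar> \<le> K * \<bar>a1 - a2\<bar> + L * \<bar>b1 - b2\<bar>"
proof -
  have "\<bar>trunc_cbrt K L a1 b1 - trunc_cbrt K L a2 b1\<bar> \<le> K * \<bar>a1 - a2\<bar>"
    using trunc_cbrt_increment_left [of K a1 a2 b1 L] trunc_cbrt_increment_left [of K a2 a1 b1 L]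
      trunc_cbrt_mono_left [of K a1 a2 b1 L] trunc_cbrt_mono_left [of K a2 a1 b1 L] assms
    by (cases "a1 \<le> a2") (auto simp: abs_le_iff)
  moreover have "\<bar>trunc_cbrt K L a2 b1 - trunc_cbrt K L a2 b2\<bar> \<le> L * \<bar>b1 - b2\<bar>"
    using trunc_cbrt_increment_right [of L a2 b1 b2 K] trunc_cbrt_increment_right [of L a2 b2 b1 K]
      trunc_cbrt_mono_right [of L b1 b2 K a2] trunc_cbrt_mono_right [of L b2 b1 K a2] assms
    by (cases "b1 \<le> b2") (auto simp: abs_le_iff)
  ultimately show ?thesis by linarith
qed

text \<open>The scheme evaluates \<open>trunc_cbrt\<close> on the positive and on the negative part of the second
  difference \<open>U\<close>; at most one of the two terms is nonzero, so the first argument enters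
  with constant \<open>K\<close> only once.\<close>

lemma trunc_cbrt_signed_lipschitz:
  assumes "0 \<le> K" "0 \<le> L" "0 \<le> A1" "0 \<le> A2" "0 \<le> P1" "0 \<le> P2"
    and "\<bar>A1 - A2\<bar> \<le> e" "\<bar>P1 - P2\<bar> \<le> e"
  shows "\<bar>(trunc_cbrt K L A1 (max U1 0) - trunc_cbrt K L P1 (max (- U1) 0))
          - (trunc_cbrt K L A2 (max U2 0) - trunc_cbrt K L P2 (max (- U2) 0))\<bar>
         \<le> K * e + L * \<bar>U1 - U2\<bar>"
proof -
  have Ke: "0 \<le> K * e" using assms by simp
  consider "0 \<le> U1" "0 \<le> U2" | "U1 \<le> 0" "U2 \<le> 0" | "0 \<le> U1" "U2 \<le> 0" | "U1 \<le> 0" "0 \<le> U2"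
    by linarith
  then show ?thesis
  proof cases
    case 1
    then have "\<bar>trunc_cbrt K L A1 U1 - trunc_cbrt K L A2 U2\<bar> \<le> K * \<bar>A1 - A2\<bar> + L * \<bar>U1 - U2\<bar>"
      using assms by (intro trunc_cbrt_lipschitz) auto
    with 1 assms show ?thesis using mult_left_mono [OF assms(7,1)] by (simp add: max_absorb1 max_absorb2)
  next
    case 2
    then have "\<bar>trunc_cbrt K L P1 (- U1) - trunc_cbrt K L P2 (- U2)\<bar> \<le> K * \<bar>P1 - P2\<bar> + L * \<bar>U1 - U2\<bar>"
      using assms trunc_cbrt_lipschitz [of K L P1 P2 "- U1" "- U2"] by (simp add: abs_minus_commute [of U2 U1])
    with 2 assms show ?thesis using mult_left_mono [OF assms(8,1)]
      by (simp add: max_absorb1 max_absorb2 abs_minus_commute)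
  next
    case 3
    then have "(trunc_cbrt K L A1 (max U1 0) - trunc_cbrt K L P1 (max (- U1) 0))
          - (trunc_cbrt K L A2 (max U2 0) - trunc_cbrt K L P2 (max (- U2) 0))
        = trunc_cbrt K L A1 U1 + trunc_cbrt K L P2 (- U2)"
      using assms by (simp add: max_absorb1 max_absorb2)
    moreover have "L * \<bar>U1 - U2\<bar> = L * U1 + L * (- U2)" using 3 by (simp add: algebra_simps)
    moreover have "0 \<le> trunc_cbrt K L A1 U1" "0 \<le> trunc_cbrt K L P2 (- U2)"
      using 3 assms by (simp_all add: trunc_cbrt_nonneg)
    ultimately show ?thesis
      using Ke trunc_cbrt_le_right [of K L A1 U1] trunc_cbrt_le_right [of K L P2 "- U2"]
      by (simp only: abs_le_iff) linarith
  next
    case 4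
    then have "(trunc_cbrt K L A1 (max U1 0) - trunc_cbrt K L P1 (max (- U1) 0))
          - (trunc_cbrt K L A2 (max U2 0) - trunc_cbrt K L P2 (max (- U2) 0))
        = - (trunc_cbrt K L A2 U2 + trunc_cbrt K L P1 (- U1))"
      using assms by (simp add: max_absorb1 max_absorb2)
    moreover have "L * \<bar>U1 - U2\<bar> = L * U2 + L * (- U1)" using 4 by (simp add: algebra_simps)
    moreover have "0 \<le> trunc_cbrt K L A2 U2" "0 \<le> trunc_cbrt K L P1 (- U1)"
      using 4 assms by (simp_all add: trunc_cbrt_nonneg)
    ultimately show ?thesis
      using Ke trunc_cbrt_le_right [of K L A2 U2] trunc_cbrt_le_right [of K L P1 "- U1"]
      by (simp only: abs_le_iff) linarith
  qed
qed

lemma max_min_zero_lipschitz: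
  fixes p1 q1 p2 q2 e :: real
  assumes "\<bar>p1 - p2\<bar> \<le> e" "\<bar>q1 - q2\<bar> \<le> e"
  shows "\<bar>max (max p1 q1) 0 - max (max p2 q2) 0\<bar> \<le> e"
    and "\<bar>min (min p1 q1) 0 - min (min p2 q2) 0\<bar> \<le> e"
  using assms by (auto simp: abs_le_iff max_def min_def)

lemma Adelta_nonneg:
  assumes "0 \<le> K" "0 \<le> L" "0 \<le> p" "0 \<le> q"
  shows "Adelta K L p q = trunc_cbrt K L p q"
  using assms by (cases "q = 0") (auto simp: Adelta_def Acube_def trunc_cbrt_def)

lemma Adelta_nonpos:
  assumes "0 \<le> K" "0 \<le> L" "p \<le> 0" "q \<le> 0"
  shows "Adelta K L p q = - trunc_cbrt K L (- p) (- q)"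
proof -
  have "\<bar>Acube p q\<bar> = root 3 ((- p)\<^sup>2 * (- q))"
    using assms unfolding Acube_def by (simp add: real_root_minus [symmetric] mult_nonneg_nonpos)
  then show ?thesis
    using assms mult_nonneg_nonpos [of K p] by (cases "q = 0") (auto simp: Adelta_def trunc_cbrt_def)
qed

lemma F1D_scheme_eq:
  assumes "0 \<le> K" "0 \<le> L"
  shows "F1D_scheme K L h u x =
     trunc_cbrt K L (- neg_uxh_minus h u x) (max (uxxh h u x) 0)
     - trunc_cbrt K L (uxh_plus h u x) (max (- uxxh h u x) 0)"
proof -
  have "0 \<le> uxh_plus h u x" "neg_uxh_minus h u x \<le> 0"
    unfolding uxh_plus_def neg_uxh_minus_def by simp_all
  moreover have "- min (- uxxh h u x) 0 = max (uxxh h u x) 0" by linarith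
  ultimately show ?thesis
    using assms unfolding F1D_scheme_def Adelta_plus_def Adelta_minus_def pospart_def negpart_def
    by (simp add: Adelta_nonneg Adelta_nonpos max_absorb1 min_absorb1)
qed

lemma F1D_scheme_lipschitz:
  assumes "0 \<le> K" "0 \<le> L" "0 < h"
    and "\<bar>(u x - u (x + h)) - (w x - w (x + h))\<bar> \<le> M"
    and "\<bar>(u x - u (x - h)) - (w x - w (x - h))\<bar> \<le> M"
  shows "\<bar>F1D_scheme K L h u x - F1D_scheme K L h w x\<bar> \<le> (K / h + 2 * L / h\<^sup>2) * M"
proof -
  have quot: "\<bar>(u x - u (x + h)) / h - (w x - w (x + h)) / h\<bar> \<le> M / h"
    "\<bar>(u x - u (x - h)) / h - (w x - w (x - h)) / h\<bar> \<le> M / h"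
    using assms by (simp_all add: diff_divide_distrib [symmetric] divide_right_mono)
  have A: "\<bar>(- neg_uxh_minus h u x) - (- neg_uxh_minus h w x)\<bar> \<le> M / h"
    using max_min_zero_lipschitz(2) [OF quot] unfolding neg_uxh_minus_def by (simp add: abs_minus_commute)
  have P: "\<bar>uxh_plus h u x - uxh_plus h w x\<bar> \<le> M / h"
    using max_min_zero_lipschitz(1) [OF quot] unfolding uxh_plus_def .
  have U: "\<bar>uxxh h u x - uxxh h w x\<bar> \<le> 2 * M / h\<^sup>2"
  proof -
    have "uxxh h u x - uxxh h w x
        = - (((u x - u (x + h)) - (w x - w (x + h))) + ((u x - u (x - h)) - (w x - w (x - h)))) / h\<^sup>2"
      using assms(3) unfolding uxxh_def by (simp add: field_simps)
    moreover have "\<bar>((u x - u (x + h)) - (w x - w (x + h))) + ((u x - u (x - h)) - (w x - w (x - h)))\<bar> \<le> 2 * M"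
      using assms by linarith
    ultimately show ?thesis by (simp add: divide_right_mono)
  qed
  have "0 \<le> - neg_uxh_minus h v x" "0 \<le> uxh_plus h v x" for v
    unfolding neg_uxh_minus_def uxh_plus_def by simp_all
  then have "\<bar>F1D_scheme K L h u x - F1D_scheme K L h w x\<bar>
      \<le> K * (M / h) + L * \<bar>uxxh h u x - uxxh h w x\<bar>"
    unfolding F1D_scheme_eq [OF assms(1,2)] using A P by (intro trunc_cbrt_signed_lipschitz assms(1,2))
  also have "\<dots> \<le> K * (M / h) + L * (2 * M / h\<^sup>2)"
    by (rule add_left_mono [OF mult_left_mono [OF U assms(2)]])
  also have "\<dots> = (K / h + 2 * L / h\<^sup>2) * M" by (simp add: field_simps)
  finally show ?thesis .
qed

lemma F1De_lipschitz:
  assumes "0 < h"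
  shows "scheme_lipschitz h (F1De h) (h powr (-4/3) + 2 * h powr (-10/3))"
  unfolding scheme_lipschitz_def
proof (intro allI impI)
  fix x r s M :: real and v w :: "real \<Rightarrow> real"
  assume bound: "\<bar>r - s\<bar> \<le> M \<and> (\<forall>k::int. \<bar>v (x + of_int k * h) - w (x + of_int k * h)\<bar> \<le> M)"
  define u1 u2 where "u1 = (\<lambda>y. if y = x then r else r - v y)" and "u2 = (\<lambda>y. if y = x then s else s - w y)"
  have "\<bar>v (x + h) - w (x + h)\<bar> \<le> M" "\<bar>v (x - h) - w (x - h)\<bar> \<le> M"
    using bound [THEN conjunct2, rule_format, of 1] bound [THEN conjunct2, rule_format, of "-1"] by simp_all
  then have "\<bar>F1De h u1 x - F1De h u2 x\<bar> \<le> (h powr (-1/3) / h + 2 * h powr (-4/3) / h\<^sup>2) * M"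
    unfolding F1De_def using assms by (intro F1D_scheme_lipschitz) (auto simp: u1_def u2_def)
  moreover have "h powr (-1/3) / h = h powr (-4/3)"
    using powr_diff [of h "-1/3" 1] assms by simp
  moreover have "2 * h powr (-4/3) / h\<^sup>2 = 2 * h powr (-10/3)"
    using powr_diff [of h "-4/3" 2] assms by simp
  ultimately show "\<bar>scheme_rep (F1De h) x r v - scheme_rep (F1De h) x s w\<bar>
      \<le> (h powr (-4/3) + 2 * h powr (-10/3)) * M"
    unfolding scheme_rep_def u1_def u2_def by simp
qed

lemma difference_quotient_errors:
  fixes D :: "nat \<Rightarrow> real \<Rightarrow> real"
  assumes der: "\<And>m t. y - h \<le> t \<Longrightarrow> t \<le> y + h \<Longrightarrow> (D m has_real_derivative D (Suc m) t) (at t)"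
    and M: "\<And>t. y - h \<le> t \<Longrightarrow> t \<le> y + h \<Longrightarrow> \<bar>D 2 t\<bar> \<le> M"
    and N: "\<And>t. y - h \<le> t \<Longrightarrow> t \<le> y + h \<Longrightarrow> \<bar>D 4 t\<bar> \<le> N"
    and "0 < h"
  shows "\<bar>(D 0 y - D 0 (y + h)) / h + D 1 y\<bar> \<le> M * h / 2"
    and "\<bar>(D 0 y - D 0 (y - h)) / h - D 1 y\<bar> \<le> M * h / 2"
    and "\<bar>uxxh h (D 0) y - D 2 y\<bar> \<le> N * h\<^sup>2 / 12"
proof -
  have up: "\<exists>t. y - h \<le> t \<and> t \<le> y + h \<and>
      D 0 (y + h) = (\<Sum>m<n. D m y / fact m * h ^ m) + D n t / fact n * h ^ n" if n: "0 < n" for n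
  proof -
    obtain t where "y < t" "t < y + h"
      "D 0 (y + h) = (\<Sum>m<n. D m y / fact m * (y + h - y) ^ m) + D n t / fact n * (y + h - y) ^ n"
      using Taylor_up [where diff = D and f = "D 0" and a = y and b = "y + h" and c = y and n = n]
        der n \<open>0 < h\<close> by (auto intro: less_imp_le)
    then show ?thesis by (intro exI [of _ t]) auto
  qed
  have down: "\<exists>t. y - h \<le> t \<and> t \<le> y + h \<and>
      D 0 (y - h) = (\<Sum>m<n. D m y / fact m * (- h) ^ m) + D n t / fact n * (- h) ^ n" if n: "0 < n" for n
  proof -
    obtain t where "y - h < t" "t < y"
      "D 0 (y - h) = (\<Sum>m<n. D m y / fact m * (y - h - y) ^ m) + D n t / fact n * (y - h - y) ^ n"
      using Taylor_down [where diff = D and f = "D 0" and a = "y - h" and b = y and c = y and n = n]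
        der n \<open>0 < h\<close> by (auto intro: less_imp_le)
    then show ?thesis using \<open>0 < h\<close> by (intro exI [of _ t]) auto
  qed
  obtain t1 where t1: "y - h \<le> t1" "t1 \<le> y + h" "D 0 (y + h) = D 0 y + D 1 y * h + D 2 t1 / 2 * h\<^sup>2"
    using up [of 2] by (auto simp: eval_nat_numeral)
  obtain t2 where t2: "y - h \<le> t2" "t2 \<le> y + h" "D 0 (y - h) = D 0 y - D 1 y * h + D 2 t2 / 2 * h\<^sup>2"
    using down [of 2] by (auto simp: eval_nat_numeral)
  obtain t3 where t3: "y - h \<le> t3" "t3 \<le> y + h"
    "D 0 (y + h) = D 0 y + D 1 y * h + D 2 y / 2 * h\<^sup>2 + D 3 y / 6 * h ^ 3 + D 4 t3 / 24 * h ^ 4"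
    using up [of 4] by (auto simp: eval_nat_numeral)
  obtain t4 where t4: "y - h \<le> t4" "t4 \<le> y + h"
    "D 0 (y - h) = D 0 y - D 1 y * h + D 2 y / 2 * h\<^sup>2 - D 3 y / 6 * h ^ 3 + D 4 t4 / 24 * h ^ 4"
    using down [of 4] by (auto simp: eval_nat_numeral)
  have "(D 0 y - D 0 (y + h)) / h + D 1 y = - D 2 t1 / 2 * h"
    using t1 \<open>0 < h\<close> by (simp add: field_simps power2_eq_square)
  then show "\<bar>(D 0 y - D 0 (y + h)) / h + D 1 y\<bar> \<le> M * h / 2"
    using M [OF t1(1,2)] \<open>0 < h\<close> by (simp add: abs_mult mult_right_mono)
  have "(D 0 y - D 0 (y - h)) / h - D 1 y = - D 2 t2 / 2 * h"
    using t2 \<open>0 < h\<close> by (simp add: field_simps power2_eq_square)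
  then show "\<bar>(D 0 y - D 0 (y - h)) / h - D 1 y\<bar> \<le> M * h / 2"
    using M [OF t2(1,2)] \<open>0 < h\<close> by (simp add: abs_mult mult_right_mono)
  have "uxxh h (D 0) y - D 2 y = (D 4 t3 + D 4 t4) / 24 * h\<^sup>2"
    unfolding uxxh_def t3(3) t4(3) using \<open>0 < h\<close> by (simp add: field_simps power2_eq_square eval_nat_numeral)
  then have "\<bar>uxxh h (D 0) y - D 2 y\<bar> = \<bar>D 4 t3 + D 4 t4\<bar> / 24 * h\<^sup>2"
    by (simp only: abs_mult abs_divide) simp
  also have "\<dots> \<le> 2 * N / 24 * h\<^sup>2"
    using N [OF t3(1,2)] N [OF t4(1,2)] by (intro mult_right_mono divide_right_mono) auto
  finally show "\<bar>uxxh h (D 0) y - D 2 y\<bar> \<le> N * h\<^sup>2 / 12" by simp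
qed

lemma smooth_on_has_real_derivative:
  assumes "open U" "smooth_on U f" "t \<in> U"
  shows "((deriv ^^ n) f has_real_derivative (deriv ^^ Suc n) f t) (at t)"
proof -
  have "(deriv ^^ n) f differentiable (at t within U)"
    using assms(2,3) unfolding smooth_on_def differentiable_on_def by blast
  then have "(deriv ^^ n) f differentiable at t" using at_within_open [OF assms(3,1)] by simp
  then show ?thesis by (simp add: DERIV_deriv_iff_real_differentiable)
qed

lemma smooth_on_difference_quotient_errors:
  assumes "open U" "smooth_on U f" "x \<in> U"
  obtains \<delta> C where "0 < \<delta>"
    and "\<And>h y. 0 < h \<Longrightarrow> \<bar>y - x\<bar> + h \<le> \<delta> \<Longrightarrow> \<bar>(f y - f (y + h)) / h + deriv f y\<bar> \<le> C * h"
    and "\<And>h y. 0 < h \<Longrightarrow> \<bar>y - x\<bar> + h \<le> \<delta> \<Longrightarrow> \<bar>(f y - f (y - h)) / h - deriv f y\<bar> \<le> C * h"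
    and "\<And>h y. 0 < h \<Longrightarrow> \<bar>y - x\<bar> + h \<le> \<delta> \<Longrightarrow> \<bar>uxxh h f y - deriv (deriv f) y\<bar> \<le> C * h\<^sup>2"
proof -
  obtain \<delta> where "0 < \<delta>" and ball: "cball x \<delta> \<subseteq> U" using open_contains_cball assms(1,3) by blast
  define D where "D n = (deriv ^^ n) f" for n
  have D: "D 0 = f" "D 1 = deriv f" "D 2 = deriv (deriv f)" by (simp_all add: D_def eval_nat_numeral)
  have der: "(D m has_real_derivative D (Suc m) t) (at t)" if "t \<in> cball x \<delta>" for m t
    unfolding D_def by (rule smooth_on_has_real_derivative [OF assms(1,2) subsetD [OF ball that]])
  have bound: "\<exists>M. \<forall>t\<in>cball x \<delta>. \<bar>D n t\<bar> \<le> M" for n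
  proof -
    have "continuous_on (cball x \<delta>) (D n)"
      using der by (meson DERIV_isCont continuous_at_imp_continuous_on)
    then have "bounded (D n ` cball x \<delta>)"
      by (intro compact_imp_bounded compact_continuous_image) auto
    then obtain M where "\<forall>y\<in>D n ` cball x \<delta>. norm y \<le> M" unfolding bounded_iff by blast
    then show ?thesis by auto
  qed
  obtain M2 where M2: "\<And>t. t \<in> cball x \<delta> \<Longrightarrow> \<bar>D 2 t\<bar> \<le> M2" using bound [of 2] by blast
  obtain M4 where M4: "\<And>t. t \<in> cball x \<delta> \<Longrightarrow> \<bar>D 4 t\<bar> \<le> M4" using bound [of 4] by blast
  define C where "C = max (M2 / 2) (M4 / 12)"
  have C: "M2 * h / 2 \<le> C * h" "M4 * h\<^sup>2 / 12 \<le> C * h\<^sup>2" if "0 < h" for h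
    using mult_right_mono [of "M2 / 2" C h] mult_right_mono [of "M4 / 12" C "h\<^sup>2"] that
    by (simp_all add: C_def)
  show thesis
  proof (rule that [OF \<open>0 < \<delta>\<close>])
    fix h y assume h: "0 < h" and near: "\<bar>y - x\<bar> + h \<le> \<delta>"
    have inside: "t \<in> cball x \<delta>" if "y - h \<le> t" "t \<le> y + h" for t
      using that near by (auto simp: dist_real_def)
    note errors = difference_quotient_errors [where D = D and y = y and h = h and M = M2 and N = M4,
        OF der [OF inside] M2 [OF inside] M4 [OF inside] h, unfolded D]
    show "\<bar>(f y - f (y + h)) / h + deriv f y\<bar> \<le> C * h"
      using errors(1) C(1) [OF h] by (rule order_trans)
    show "\<bar>(f y - f (y - h)) / h - deriv f y\<bar> \<le> C * h"
      using errors(2) C(1) [OF h] by (rule order_trans)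
    show "\<bar>uxxh h f y - deriv (deriv f) y\<bar> \<le> C * h\<^sup>2"
      using errors(3) C(2) [OF h] by (rule order_trans)
  qed
qed

lemma difference_quotients_tendsto:
  assumes "open U" "smooth_on U \<phi>" "x \<in> U"
  shows "((\<lambda>z. uxh_plus (fst z) \<phi> (snd z)) \<longlongrightarrow> \<bar>deriv \<phi> x\<bar>) (at_right 0 \<times>\<^sub>F nhds x)"
    and "((\<lambda>z. - neg_uxh_minus (fst z) \<phi> (snd z)) \<longlongrightarrow> \<bar>deriv \<phi> x\<bar>) (at_right 0 \<times>\<^sub>F nhds x)"
    and "((\<lambda>z. uxxh (fst z) \<phi> (snd z)) \<longlongrightarrow> deriv (deriv \<phi>) x) (at_right 0 \<times>\<^sub>F nhds x)"
proof -
  let ?F = "at_right (0::real) \<times>\<^sub>F nhds x"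
  obtain \<delta> C where "0 < \<delta>"
    and err1: "\<And>h y. 0 < h \<Longrightarrow> \<bar>y - x\<bar> + h \<le> \<delta> \<Longrightarrow> \<bar>(\<phi> y - \<phi> (y + h)) / h + deriv \<phi> y\<bar> \<le> C * h"
    and err2: "\<And>h y. 0 < h \<Longrightarrow> \<bar>y - x\<bar> + h \<le> \<delta> \<Longrightarrow> \<bar>(\<phi> y - \<phi> (y - h)) / h - deriv \<phi> y\<bar> \<le> C * h"
    and err3: "\<And>h y. 0 < h \<Longrightarrow> \<bar>y - x\<bar> + h \<le> \<delta> \<Longrightarrow> \<bar>uxxh h \<phi> y - deriv (deriv \<phi>) y\<bar> \<le> C * h\<^sup>2"
    by (rule smooth_on_difference_quotient_errors [OF assms]) (rule that)
  have "\<forall>\<^sub>F h in at_right 0. 0 < h \<and> h \<le> \<delta> / 2"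
    using \<open>0 < \<delta>\<close> unfolding eventually_at_right_field by (intro exI [of _ "\<delta> / 2"]) auto
  moreover have "\<forall>\<^sub>F y in nhds x. \<bar>y - x\<bar> \<le> \<delta> / 2"
    using \<open>0 < \<delta>\<close> unfolding eventually_nhds_metric dist_real_def by (intro exI [of _ "\<delta> / 2"]) auto
  ultimately have "\<forall>\<^sub>F z in ?F. (0 < fst z \<and> fst z \<le> \<delta> / 2) \<and> \<bar>snd z - x\<bar> \<le> \<delta> / 2"
    by (rule eventually_prodI)
  then have near: "\<forall>\<^sub>F z in ?F. 0 < fst z \<and> \<bar>snd z - x\<bar> + fst z \<le> \<delta>"
    by eventually_elim auto
  have approx: "(g \<longlongrightarrow> l) ?F"
    if "(f \<longlongrightarrow> l) ?F" "(e \<longlongrightarrow> 0) ?F" "\<forall>\<^sub>F z in ?F. \<bar>g z - f z\<bar> \<le> e z"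
    for f g e :: "real \<times> real \<Rightarrow> real" and l
  proof -
    have "((\<lambda>z. g z - f z) \<longlongrightarrow> 0) ?F"
      by (rule Lim_null_comparison [OF _ that(2)]) (use that(3) in simp)
    from tendsto_add [OF this that(1)] show ?thesis by simp
  qed
  have h0: "(fst \<longlongrightarrow> 0) ?F" by (rule filterlim_compose [OF tendsto_ident_at filterlim_fst])
  have h0_sq: "((\<lambda>z. (fst z)\<^sup>2) \<longlongrightarrow> 0) ?F" using tendsto_power [OF h0, of 2] by simp
  have cont: "((\<lambda>z. (deriv ^^ n) \<phi> (snd z)) \<longlongrightarrow> (deriv ^^ n) \<phi> x) ?F" for n
    using DERIV_isCont [OF smooth_on_has_real_derivative [OF assms]] filterlim_snd
    by (rule isCont_tendsto_compose)
  have cont1: "((\<lambda>z. deriv \<phi> (snd z)) \<longlongrightarrow> deriv \<phi> x) ?F"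
    and cont2: "((\<lambda>z. deriv (deriv \<phi>) (snd z)) \<longlongrightarrow> deriv (deriv \<phi>) x) ?F"
    using cont [of 1] cont [of 2] by (simp_all add: eval_nat_numeral)
  have q1: "((\<lambda>z. (\<phi> (snd z) - \<phi> (snd z + fst z)) / fst z) \<longlongrightarrow> - deriv \<phi> x) ?F"
    by (rule approx [OF tendsto_minus [OF cont1] tendsto_mult_right_zero [OF h0, of C]])
      (use near in \<open>eventually_elim, use err1 in auto\<close>)
  have q2: "((\<lambda>z. (\<phi> (snd z) - \<phi> (snd z - fst z)) / fst z) \<longlongrightarrow> deriv \<phi> x) ?F"
    by (rule approx [OF cont1 tendsto_mult_right_zero [OF h0, of C]])
      (use near in \<open>eventually_elim, use err2 in auto\<close>)
  show "((\<lambda>z. uxxh (fst z) \<phi> (snd z)) \<longlongrightarrow> deriv (deriv \<phi>) x) ?F"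
    by (rule approx [OF cont2 tendsto_mult_right_zero [OF h0_sq, of C]])
      (use near in \<open>eventually_elim, use err3 in \<open>auto simp: eval_nat_numeral\<close>\<close>)
  have abs_eq: "max (max (- deriv \<phi> x) (deriv \<phi> x)) 0 = \<bar>deriv \<phi> x\<bar>"
    "- min (min (- deriv \<phi> x) (deriv \<phi> x)) 0 = \<bar>deriv \<phi> x\<bar>" by auto
  have "((\<lambda>z. max (max ((\<phi> (snd z) - \<phi> (snd z + fst z)) / fst z) ((\<phi> (snd z) - \<phi> (snd z - fst z)) / fst z)) 0)
      \<longlongrightarrow> max (max (- deriv \<phi> x) (deriv \<phi> x)) 0) ?F"
    by (intro tendsto_max q1 q2 tendsto_const)
  then show "((\<lambda>z. uxh_plus (fst z) \<phi> (snd z)) \<longlongrightarrow> \<bar>deriv \<phi> x\<bar>) ?F"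
    unfolding uxh_plus_def abs_eq .
  have "((\<lambda>z. - min (min ((\<phi> (snd z) - \<phi> (snd z + fst z)) / fst z) ((\<phi> (snd z) - \<phi> (snd z - fst z)) / fst z)) 0)
      \<longlongrightarrow> - min (min (- deriv \<phi> x) (deriv \<phi> x)) 0) ?F"
    by (intro tendsto_minus tendsto_min q1 q2 tendsto_const)
  then show "((\<lambda>z. - neg_uxh_minus (fst z) \<phi> (snd z)) \<longlongrightarrow> \<bar>deriv \<phi> x\<bar>) ?F"
    unfolding neg_uxh_minus_def abs_eq .
qed

lemma trunc_cbrt_eventually_exact:
  assumes "filterlim Kf at_top F" "filterlim Lf at_top F" "0 \<le> a" "0 \<le> b"
  shows "\<forall>\<^sub>F z in F. trunc_cbrt (Kf z) (Lf z) a b = root 3 (a\<^sup>2 * b)"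
proof (cases "a = 0 \<or> b = 0")
  case True
  have "\<forall>\<^sub>F z in F. 0 \<le> Kf z" "\<forall>\<^sub>F z in F. 0 \<le> Lf z"
    using assms(1,2) unfolding filterlim_at_top by blast+
  then show ?thesis by eventually_elim (use True assms in \<open>auto simp: trunc_cbrt_def min_def\<close>)
next
  case False
  then have "0 < a" "0 < b" using assms by auto
  have "\<forall>\<^sub>F z in F. root 3 (a\<^sup>2 * b) / a \<le> Kf z" "\<forall>\<^sub>F z in F. root 3 (a\<^sup>2 * b) / b \<le> Lf z"
    using assms(1,2) unfolding filterlim_at_top by blast+
  then show ?thesis
    by eventually_elim (use \<open>0 < a\<close> \<open>0 < b\<close> in \<open>auto simp: trunc_cbrt_def min_def divide_le_eq mult.commute\<close>)
qed

text \<open>Where the limit \<open>root 3 (\<alpha>\<^sup>2 * \<beta>)\<close> is positive, both truncation levels eventually exceed it;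
  where it vanishes, the truncation is squeezed between \<open>0\<close> and the untruncated cube root.\<close>

lemma trunc_cbrt_tendsto:
  assumes K: "filterlim Kf at_top F" and L: "filterlim Lf at_top F"
    and A: "(A \<longlongrightarrow> \<alpha>) F" and B: "(B \<longlongrightarrow> \<beta>) F"
    and nonneg: "\<And>z. 0 \<le> A z" "\<And>z. 0 \<le> B z" "0 \<le> \<alpha>" "0 \<le> \<beta>"
  shows "((\<lambda>z. trunc_cbrt (Kf z) (Lf z) (A z) (B z)) \<longlongrightarrow> root 3 (\<alpha>\<^sup>2 * \<beta>)) F"
proof -
  let ?r = "root 3 (\<alpha>\<^sup>2 * \<beta>)"
  have R: "((\<lambda>z. root 3 ((A z)\<^sup>2 * B z)) \<longlongrightarrow> ?r) F" using A B by (intro tendsto_intros)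
  show ?thesis
  proof (cases "\<alpha> = 0 \<or> \<beta> = 0")
    case True
    then have r0: "?r = 0" by auto
    have "\<forall>\<^sub>F z in F. 0 \<le> Kf z" "\<forall>\<^sub>F z in F. 0 \<le> Lf z"
      using K L unfolding filterlim_at_top by blast+
    then have "\<forall>\<^sub>F z in F. 0 \<le> trunc_cbrt (Kf z) (Lf z) (A z) (B z)"
      by eventually_elim (simp add: trunc_cbrt_nonneg nonneg)
    moreover have "\<forall>\<^sub>F z in F. trunc_cbrt (Kf z) (Lf z) (A z) (B z) \<le> root 3 ((A z)\<^sup>2 * B z)"
      by (simp add: trunc_cbrt_def)
    ultimately show ?thesis
      unfolding r0 using tendsto_const R [unfolded r0] by (rule tendsto_sandwich)
  next
    case False
    then have "0 < \<alpha>" "0 < \<beta>" using nonneg(3,4) by auto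
    have "filterlim (\<lambda>z. A z * Kf z) at_top F" "filterlim (\<lambda>z. B z * Lf z) at_top F"
      by (rule filterlim_tendsto_pos_mult_at_top [OF A \<open>0 < \<alpha>\<close> K],
          rule filterlim_tendsto_pos_mult_at_top [OF B \<open>0 < \<beta>\<close> L])
    then have "\<forall>\<^sub>F z in F. ?r + 1 \<le> A z * Kf z" "\<forall>\<^sub>F z in F. ?r + 1 \<le> B z * Lf z"
      unfolding filterlim_at_top by blast+
    moreover have "\<forall>\<^sub>F z in F. root 3 ((A z)\<^sup>2 * B z) < ?r + 1"
      using order_tendstoD(2) [OF R] by simp
    ultimately have "\<forall>\<^sub>F z in F. root 3 ((A z)\<^sup>2 * B z) = trunc_cbrt (Kf z) (Lf z) (A z) (B z)"
      by eventually_elim (simp add: trunc_cbrt_def min_def mult.commute)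
    then show ?thesis by (rule Lim_transform_eventually [OF R])
  qed
qed

lemma root3_split: "root 3 (a\<^sup>2 * b) = root 3 (\<bar>a\<bar>\<^sup>2 * max b 0) - root 3 (\<bar>a\<bar>\<^sup>2 * max (- b) 0)"
  by (cases "0 \<le> b") (auto simp: max_def real_root_minus [symmetric])

lemma F1De_consistent:
  assumes "open U" "smooth_on U \<phi>" "x \<in> U"
  shows "((\<lambda>(h, y). F1De h \<phi> y) \<longlongrightarrow> F1D \<phi> x) (at_right 0 \<times>\<^sub>F nhds x)"
proof -
  let ?F = "at_right (0::real) \<times>\<^sub>F nhds x"
  let ?K = "\<lambda>z. fst z powr (-1/3)" and ?L = "\<lambda>z. fst z powr (-4/3)"
  have K: "filterlim ?K at_top ?F" and L: "filterlim ?L at_top ?F"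
    by (rule filterlim_compose [OF _ filterlim_fst], real_asymp)+
  note lim = difference_quotients_tendsto [OF assms]
  have "((\<lambda>z. trunc_cbrt (?K z) (?L z) (- neg_uxh_minus (fst z) \<phi> (snd z)) (max (uxxh (fst z) \<phi> (snd z)) 0))
      \<longlongrightarrow> root 3 (\<bar>deriv \<phi> x\<bar>\<^sup>2 * max (deriv (deriv \<phi>) x) 0)) ?F"
    by (intro trunc_cbrt_tendsto K L lim tendsto_max tendsto_const) (simp_all add: neg_uxh_minus_def)
  moreover have "((\<lambda>z. trunc_cbrt (?K z) (?L z) (uxh_plus (fst z) \<phi> (snd z)) (max (- uxxh (fst z) \<phi> (snd z)) 0))
      \<longlongrightarrow> root 3 (\<bar>deriv \<phi> x\<bar>\<^sup>2 * max (- deriv (deriv \<phi>) x) 0)) ?F"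
    by (intro trunc_cbrt_tendsto K L lim tendsto_max tendsto_minus tendsto_const) (simp_all add: uxh_plus_def)
  ultimately have "((\<lambda>z. F1De (fst z) \<phi> (snd z)) \<longlongrightarrow> F1D \<phi> x) ?F"
    unfolding F1De_def F1D_def root3_split [of "deriv \<phi> x"] by (simp add: F1D_scheme_eq tendsto_diff)
  then show ?thesis by (simp add: case_prod_beta')
qed

lemma F1De_accuracy:
  assumes "open U" "smooth_on U \<phi>" "x \<in> U"
  shows "\<exists>C h0. h0 > 0 \<and> (\<forall>h. 0 < h \<and> h < h0 \<longrightarrow> \<bar>F1De h \<phi> x - F1D \<phi> x\<bar> \<le> C * h powr (2/3))"
proof -
  obtain \<delta> C where "0 < \<delta>"
    and err1: "\<And>h y. 0 < h \<Longrightarrow> \<bar>y - x\<bar> + h \<le> \<delta> \<Longrightarrow> \<bar>(\<phi> y - \<phi> (y + h)) / h + deriv \<phi> y\<bar> \<le> C * h"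
    and err2: "\<And>h y. 0 < h \<Longrightarrow> \<bar>y - x\<bar> + h \<le> \<delta> \<Longrightarrow> \<bar>(\<phi> y - \<phi> (y - h)) / h - deriv \<phi> y\<bar> \<le> C * h"
    and err3: "\<And>h y. 0 < h \<Longrightarrow> \<bar>y - x\<bar> + h \<le> \<delta> \<Longrightarrow> \<bar>uxxh h \<phi> y - deriv (deriv \<phi>) y\<bar> \<le> C * h\<^sup>2"
    by (rule smooth_on_difference_quotient_errors [OF assms]) (rule that)
  define a b where "a = deriv \<phi> x" and "b = deriv (deriv \<phi>) x"
  let ?K = "\<lambda>h::real. h powr (-1/3)" and ?L = "\<lambda>h::real. h powr (-4/3)"
  have K: "filterlim ?K at_top (at_right 0)" and L: "filterlim ?L at_top (at_right 0)" by real_asymp+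
  have "\<forall>\<^sub>F h in at_right 0. h < \<delta>"
    using \<open>0 < \<delta>\<close> eventually_at_right_field by blast
  moreover have "\<forall>\<^sub>F h in at_right 0. trunc_cbrt (?K h) (?L h) \<bar>a\<bar> (max b 0) = root 3 (\<bar>a\<bar>\<^sup>2 * max b 0)"
    by (intro trunc_cbrt_eventually_exact K L) auto
  moreover have "\<forall>\<^sub>F h in at_right 0. trunc_cbrt (?K h) (?L h) \<bar>a\<bar> (max (- b) 0) = root 3 (\<bar>a\<bar>\<^sup>2 * max (- b) 0)"
    by (intro trunc_cbrt_eventually_exact K L) auto
  ultimately have "\<forall>\<^sub>F h in at_right 0. h < \<delta> \<and> F1D \<phi> x
      = trunc_cbrt (?K h) (?L h) \<bar>a\<bar> (max b 0) - trunc_cbrt (?K h) (?L h) \<bar>a\<bar> (max (- b) 0)"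
    unfolding F1D_def root3_split [of "deriv \<phi> x"] a_def b_def by eventually_elim simp
  then obtain h0 where "0 < h0" and small: "\<And>h. 0 < h \<Longrightarrow> h < h0 \<Longrightarrow> h < \<delta> \<and> F1D \<phi> x
      = trunc_cbrt (?K h) (?L h) \<bar>a\<bar> (max b 0) - trunc_cbrt (?K h) (?L h) \<bar>a\<bar> (max (- b) 0)"
    unfolding eventually_at_right_field by auto
  have "\<bar>F1De h \<phi> x - F1D \<phi> x\<bar> \<le> 2 * C * h powr (2/3)" if h: "0 < h" "h < h0" for h
  proof -
    have "\<bar>(\<phi> x - \<phi> (x + h)) / h - (- a)\<bar> \<le> C * h" "\<bar>(\<phi> x - \<phi> (x - h)) / h - a\<bar> \<le> C * h"
      using err1 [of h x] err2 [of h x] small [OF h] h unfolding a_def by auto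
    note quot = max_min_zero_lipschitz [OF this]
    have abs_a: "- min (min (- a) a) 0 = \<bar>a\<bar>" "max (max (- a) a) 0 = \<bar>a\<bar>" by auto
    have "\<bar>F1De h \<phi> x - F1D \<phi> x\<bar> \<le> ?K h * (C * h) + ?L h * \<bar>uxxh h \<phi> x - b\<bar>"
      unfolding F1De_def F1D_scheme_eq [OF powr_ge_zero powr_ge_zero] small [OF h, THEN conjunct2]
    proof (rule trunc_cbrt_signed_lipschitz)
      show "\<bar>- neg_uxh_minus h \<phi> x - \<bar>a\<bar>\<bar> \<le> C * h"
        using quot(2) unfolding neg_uxh_minus_def abs_a(1) [symmetric] by (simp only: minus_diff_minus abs_minus_cancel)
      show "\<bar>uxh_plus h \<phi> x - \<bar>a\<bar>\<bar> \<le> C * h"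
        using quot(1) unfolding uxh_plus_def abs_a(2) .
    qed (auto simp: uxh_plus_def neg_uxh_minus_def)
    also have "\<dots> \<le> ?K h * (C * h) + ?L h * (C * h\<^sup>2)"
      using err3 [of h x] small [OF h] h unfolding b_def by (intro add_left_mono mult_left_mono) auto
    also have "\<dots> = C * (?K h * h + ?L h * h\<^sup>2)" by (simp add: algebra_simps)
    also have "?K h * h = h powr (2/3)" using powr_add [of h "-1/3" 1] h by simp
    also have "?L h * h\<^sup>2 = h powr (2/3)" using powr_add [of h "-4/3" 2] h by simp
    finally show ?thesis by simp
  qed
  then show ?thesis using \<open>0 < h0\<close> by blast
qed

theorem mainTheorem8:
  fixes \<phi> :: "real \<Rightarrow> real" and U :: "real set" and x :: real
  assumes "open U" and "{-1..1} \<subseteq> U" and "smooth_on U \<phi>" and "x \<in> {-1<..<1}"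
  shows "((\<lambda>(h, y). F1De h \<phi> y) \<longlongrightarrow> F1D \<phi> x) (at_right 0 \<times>\<^sub>F nhds x)
     \<and> (\<exists>C h0. h0 > 0 \<and> (\<forall>h. 0 < h \<and> h < h0 \<longrightarrow> \<bar>F1De h \<phi> x - F1D \<phi> x\<bar> \<le> C * h powr (2/3)))
     \<and> (\<forall>h>0. scheme_lipschitz h (F1De h) (h powr (-4/3) + 2 * h powr (-10/3)))"
proof -
  have "x \<in> U" using assms(2,4) by auto
  with assms(1,3) show ?thesis using F1De_consistent F1De_accuracy F1De_lipschitz by blast
qed

end
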